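(* Suppose Assumption 1 holds, and suppose expert knowledge gives $\rho(x)\ge\tilde\rho_L(x)$ for a pre-specified function $\tilde\rho_L$. Let $\bar\rho(x)=\max\{\tilde\rho_L(x),\rho_L(x)\}$. Then the sharp upper bound on $\mathrm{THR}(x)$ is $$\overline{\mathrm{THR}}_U(x)=\max\Big\{\mu_0(x)\{1-\mu_1(x)\}-\bar\rho(x)\sqrt{\mu_0(x)\{1-\mu_0(x)\}\mu_1(x)\{1-\mu_1(x)\}},\ 0\Big\}.$$ Moreover, $\overline{\mathrm{THR}}_U(x)$ is not greater than the Fréchet–Hoeffding upper bound $\min\{\mu_0(x),1-\mu_1(x)\}$ that holds under Assumption 1 alone.
   Context: Setting. Tuples $\{X,A,Y(1),Y(0)\}$ are drawn from a superpopulation, with binary treatment $A$ and binary potential outcomes $Y(a)\in\{0,1\}$. The observed outcome is $Y=AY(1)+(1-A)Y(0)$. Assumption 1: (i) $\{Y(0),Y(1)\}\perp\!\!\!\perp A\mid X$; (ii) $\epsilon<\mathbb{P}(A=1\mid X=x)<1-\epsilon$ for all $x$, for some constant $0<\epsilon<1/2$. Notation: - $\mu_a(x)=\mathbb{E}(Y\mid A=a,X=x)$. - $\mathrm{THR}(x)=\mathbb{P}(Y(0)=1,Y(1)=0\mid X=x)$. - $\rho(x)=\mathrm{Corr}(Y(0),Y(1)\mid X=x)$, defined where $0<\mu_a(x)<1$. - $\rho_L(x)=-\min\{\{1-\mu_0(x)\}\{1-\mu_1(x)\},\mu_0(x)\mu_1(x)\}\big/\sqrt{\mu_0(x)\{1-\mu_0(x)\}\mu_1(x)\{1-\mu_1(x)\}}$.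 "Sharp upper bound" means: $\mathrm{THR}(x)\le\overline{\mathrm{THR}}_U(x)$ for every joint distribution of potential outcomes compatible with the observed data, Assumption 1, and the constraint $\rho(x)\ge\tilde\rho_L(x)$; and this value is attained by some such distribution. *)

theory Defs
  imports "HOL-Probability.Probability_Mass_Function"
begin

text \<open>Conditional law, given X = x, of the triple (A, Y(0), Y(1)); True encodes 1.\<close>
type_synonym law = "(bool \<times> bool \<times> bool) pmf"

definition PrA :: "law \<Rightarrow> bool \<Rightarrow> real" where
  "PrA q a = measure_pmf.prob q {(a', y0, y1). a' = a}"

definition Yobs :: "bool \<times> bool \<times> bool \<Rightarrow> bool" where
  "Yobs z = (case z of (a, y0, y1) \<Rightarrow> if a then y1 else y0)"

definition mu :: "law \<Rightarrow> bool \<Rightarrow> real" where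
  "mu q a = measure_pmf.prob q {z. fst z = a \<and> Yobs z} / PrA q a"

definition obs :: "law \<Rightarrow> (bool \<times> bool) pmf" where
  "obs q = map_pmf (\<lambda>z. (fst z, Yobs z)) q"

definition THR :: "law \<Rightarrow> real" where
  "THR q = measure_pmf.prob q {(a, y0, y1). y0 \<and> \<not> y1}"

definition PY0 :: "law \<Rightarrow> real" where
  "PY0 q = measure_pmf.prob q {(a, y0, y1). y0}"
definition PY1 :: "law \<Rightarrow> real" where
  "PY1 q = measure_pmf.prob q {(a, y0, y1). y1}"

definition corr :: "law \<Rightarrow> real" where
  "corr q = (measure_pmf.prob q {(a, y0, y1). y0 \<and> y1} - PY0 q * PY1 q)
            / sqrt (PY0 q * (1 - PY0 q) * PY1 q * (1 - PY1 q))"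

definition assumption1 :: "real \<Rightarrow> ('x \<Rightarrow> law) \<Rightarrow> bool" where
  "assumption1 eps K \<longleftrightarrow>
     (\<forall>x a b c. measure_pmf.prob (K x) {(a, b, c)}
                 = measure_pmf.prob (K x) {z. fst z = a} * measure_pmf.prob (K x) {z. snd z = (b, c)})
   \<and> (\<forall>x. eps < PrA (K x) True \<and> PrA (K x) True < 1 - eps)"

definition rhoL :: "real \<Rightarrow> real \<Rightarrow> real" where
  "rhoL m0 m1 = - min ((1 - m0) * (1 - m1)) (m0 * m1)
                 / sqrt (m0 * (1 - m0) * m1 * (1 - m1))"

definition THR_U :: "real \<Rightarrow> real \<Rightarrow> real \<Rightarrow> real" where
  "THR_U m0 m1 rt = max (m0 * (1 - m1) - max rt (rhoL m0 m1) * sqrt (m0 * (1 - m0) * m1 * (1 - m1))) 0"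

definition compatible :: "real \<Rightarrow> ('x \<Rightarrow> real) \<Rightarrow> ('x \<Rightarrow> law) \<Rightarrow> ('x \<Rightarrow> law) \<Rightarrow> bool" where
  "compatible eps rt K K' \<longleftrightarrow>
     (\<forall>x. obs (K' x) = obs (K x)) \<and> assumption1 eps K' \<and> (\<forall>x. rt x \<le> corr (K' x))"

end

theory Submission
  imports Defs
begin

text \<open>Only the joint law of (Y(0), Y(1)) matters for THR and rho, and under
  Assumption 1 its margins are fixed by the data: P(Y(a) = 1) = mu_a. With margins m0, m1 the
  law is determined by THR = t, which ranges over the Frechet interval
  max(0, m0 - m1) <= t <= min(m0, 1 - m1), and rho = (m0 (1 - m1) - t) / s with s the product of
  the standard deviations. So rho >= rho_tilde is the linear constraint t <= m0 (1 - m1) - rho_tilde s,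
  the largest admissible t is the minimum of the two upper bounds, and rewriting the Frechet bound
  min(m0, 1 - m1) as m0 (1 - m1) - rho_L s gives the stated formula. The interval is nonempty
  because the true law lies in it, and the law attaining its right end, made independent of A
  with the true propensity score, reproduces the observed data.\<close>

abbreviation sd_prod :: "real \<Rightarrow> real \<Rightarrow> real" where
  "sd_prod m0 m1 \<equiv> sqrt (m0 * (1 - m0) * m1 * (1 - m1))"

lemma sd_prod_pos:
  assumes "0 < m0" "m0 < 1" "0 < m1" "m1 < 1"
  shows "0 < sd_prod m0 m1"
  using assms by simp

lemma frechet_eq_rhoL_bound:
  assumes "0 < m0" "m0 < 1" "0 < m1" "m1 < 1"
  shows "m0 * (1 - m1) - rhoL m0 m1 * sd_prod m0 m1 = min m0 (1 - m1)"
  using sd_prod_pos[OF assms] by (simp add: rhoL_def min_def algebra_simps)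

lemma THR_U_eq_clamp:
  assumes "0 < m0" "m0 < 1" "0 < m1" "m1 < 1"
  shows "THR_U m0 m1 rt
    = max (min (min m0 (1 - m1)) (m0 * (1 - m1) - rt * sd_prod m0 m1)) 0"
proof -
  have "max rt (rhoL m0 m1) * sd_prod m0 m1 = max (rt * sd_prod m0 m1) (rhoL m0 m1 * sd_prod m0 m1)"
    using sd_prod_pos[OF assms] by (simp add: max_def mult_right_mono mult_le_cancel_right)
  then show ?thesis
    unfolding THR_U_def frechet_eq_rhoL_bound[OF assms, symmetric]
    by (simp add: max_def min_def)
qed

lemma THR_U_le_frechet:
  assumes "0 < m0" "m0 < 1" "0 < m1" "m1 < 1"
  shows "THR_U m0 m1 rt \<le> min m0 (1 - m1)"
  using assms unfolding THR_U_eq_clamp[OF assms] by (simp add: min_def)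

lemma THR_U_eq_min:
  assumes "0 < m0" "m0 < 1" "0 < m1" "m1 < 1" "0 \<le> m0 * (1 - m1) - rt * sd_prod m0 m1"
  shows "THR_U m0 m1 rt = min (min m0 (1 - m1)) (m0 * (1 - m1) - rt * sd_prod m0 m1)"
  using assms unfolding THR_U_eq_clamp[OF assms(1-4)] by simp

lemma UNIV_bool3: "(UNIV :: (bool \<times> bool \<times> bool) set) =
    {(False, False, False), (False, False, True), (False, True, False), (False, True, True),
     (True, False, False), (True, False, True), (True, True, False), (True, True, True)}"
  by auto

lemma prob_bool3_expand:
  "measure_pmf.prob q S =
    (if (False, False, False) \<in> S then pmf q (False, False, False) else 0) +
    (if (False, False, True) \<in> S then pmf q (False, False, True) else 0) +
    (if (False, True, False) \<in> S then pmf q (False, True, False) else 0) +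
    (if (False, True, True) \<in> S then pmf q (False, True, True) else 0) +
    (if (True, False, False) \<in> S then pmf q (True, False, False) else 0) +
    (if (True, False, True) \<in> S then pmf q (True, False, True) else 0) +
    (if (True, True, False) \<in> S then pmf q (True, True, False) else 0) +
    (if (True, True, True) \<in> S then pmf q (True, True, True) else 0)"
proof -
  have "measure_pmf.prob q S = (\<Sum>z\<in>UNIV. if z \<in> S then pmf q z else 0)"
    by (simp add: measure_measure_pmf_finite sum.inter_restrict[symmetric])
  then show ?thesis
    unfolding UNIV_bool3 by (simp add: add.assoc)
qed

lemma sum_pmf_bool3:
  "pmf q (False, False, False) + pmf q (False, False, True) + pmf q (False, True, False)
    + pmf q (False, True, True) + pmf q (True, False, False) + pmf q (True, False, True)
    + pmf q (True, True, False) + pmf q (True, True, True) = 1"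
  using prob_bool3_expand[of q UNIV] by simp

lemma PrA_eq_pmf:
  "PrA q a = pmf q (a, False, False) + pmf q (a, False, True) + pmf q (a, True, False)
    + pmf q (a, True, True)"
  unfolding PrA_def prob_bool3_expand by (cases a) auto

lemma PrA_False: "PrA q False = 1 - PrA q True"
  using sum_pmf_bool3[of q] unfolding PrA_eq_pmf by simp

lemma PY0_eq_pmf:
  "PY0 q = pmf q (False, True, False) + pmf q (False, True, True) + pmf q (True, True, False)
    + pmf q (True, True, True)"
  unfolding PY0_def prob_bool3_expand by auto

lemma PY1_eq_pmf:
  "PY1 q = pmf q (False, False, True) + pmf q (False, True, True) + pmf q (True, False, True)
    + pmf q (True, True, True)"
  unfolding PY1_def prob_bool3_expand by auto

lemma THR_eq_pmf: "THR q = pmf q (False, True, False) + pmf q (True, True, False)"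
  unfolding THR_def prob_bool3_expand by auto

lemma prob_both_eq_pmf:
  "measure_pmf.prob q {(a, y0, y1). y0 \<and> y1} = pmf q (False, True, True) + pmf q (True, True, True)"
  unfolding prob_bool3_expand by auto

lemma mu_eq_pmf:
  "mu q a = (if a then pmf q (True, False, True) + pmf q (True, True, True)
    else pmf q (False, True, False) + pmf q (False, True, True)) / PrA q a"
  unfolding mu_def prob_bool3_expand by (cases a) (auto simp: Yobs_def)

lemma pmf_obs_eq_pmf:
  "pmf (obs q) (a, y) =
    (if a then if y then pmf q (True, False, True) + pmf q (True, True, True)
               else pmf q (True, False, False) + pmf q (True, True, False)
     else if y then pmf q (False, True, False) + pmf q (False, True, True)
          else pmf q (False, False, False) + pmf q (False, False, True))"
  unfolding obs_def pmf_map prob_bool3_expand by (cases a; cases y) (auto simp: Yobs_def)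

definition treatment_indep :: "law \<Rightarrow> bool" where
  "treatment_indep q \<longleftrightarrow>
     (\<forall>a y0 y1. pmf q (a, y0, y1) = PrA q a * (pmf q (False, y0, y1) + pmf q (True, y0, y1)))"

lemma assumption1_iff:
  "assumption1 eps K \<longleftrightarrow>
     (\<forall>x. treatment_indep (K x)) \<and> (\<forall>x. eps < PrA (K x) True \<and> PrA (K x) True < 1 - eps)"
proof -
  have "measure_pmf.prob q {z. fst z = a} = PrA q a" for q a
    unfolding PrA_eq_pmf prob_bool3_expand by (cases a) auto
  moreover have "measure_pmf.prob q {z. snd z = (y0, y1)} = pmf q (False, y0, y1) + pmf q (True, y0, y1)"
    for q :: law and y0 y1
    unfolding prob_bool3_expand by (cases y0; cases y1) auto
  ultimately show ?thesis
    unfolding assumption1_def treatment_indep_def by (simp add: measure_pmf_single)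
qed

lemma PrA_obs: "PrA q a = pmf (obs q) (a, True) + pmf (obs q) (a, False)"
  unfolding PrA_eq_pmf pmf_obs_eq_pmf by (cases a) auto

lemma mu_obs: "mu q a = pmf (obs q) (a, True) / PrA q a"
  unfolding mu_eq_pmf pmf_obs_eq_pmf by (cases a) auto

lemma mu_eq_if_obs_eq:
  assumes "obs q = obs q'"
  shows "mu q a = mu q' a"
  using assms by (simp add: mu_obs PrA_obs[of q] PrA_obs[of q'])

lemma pmf_obs_indep:
  assumes "treatment_indep q"
  shows "pmf (obs q) (a, y) =
    PrA q a * (if y then (if a then PY1 q else PY0 q) else 1 - (if a then PY1 q else PY0 q))"
proof -
  note indep = assms[unfolded treatment_indep_def, rule_format]
  have obs_True: "pmf (obs q) (a, True) = PrA q a * (if a then PY1 q else PY0 q)"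
    using indep[of True False True] indep[of True True True]
      indep[of False True False] indep[of False True True]
    unfolding pmf_obs_eq_pmf PY0_eq_pmf PY1_eq_pmf by (cases a) (simp_all add: algebra_simps)
  then show ?thesis
    using PrA_obs[of q a] by (cases y) (auto simp: algebra_simps)
qed

lemma mu_eq_PY:
  assumes "treatment_indep q" "PrA q a \<noteq> 0"
  shows "mu q a = (if a then PY1 q else PY0 q)"
  using assms by (simp add: mu_obs pmf_obs_indep)

lemma obs_eq_if_indep:
  assumes "treatment_indep q" "treatment_indep q'"
    and "PrA q True = PrA q' True" "PY0 q = PY0 q'" "PY1 q = PY1 q'"
  shows "obs q = obs q'"
proof (rule pmf_eqI)
  fix z :: "bool \<times> bool"
  have "PrA q a = PrA q' a" for a
    using assms(3) by (cases a) (simp_all add: PrA_False)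
  then show "pmf (obs q) z = pmf (obs q') z"
    using assms by (cases z) (simp add: pmf_obs_indep)
qed

lemma THR_frechet_bounds:
  "0 \<le> THR q" "PY0 q - PY1 q \<le> THR q" "THR q \<le> PY0 q" "THR q \<le> 1 - PY1 q"
  using sum_pmf_bool3[of q] pmf_nonneg[of q]
  unfolding THR_eq_pmf PY0_eq_pmf PY1_eq_pmf by (smt (verit))+

lemma THR_eq_corr:
  assumes "0 < PY0 q" "PY0 q < 1" "0 < PY1 q" "PY1 q < 1"
  shows "THR q = PY0 q * (1 - PY1 q) - corr q * sd_prod (PY0 q) (PY1 q)"
proof -
  have "corr q * sd_prod (PY0 q) (PY1 q) = measure_pmf.prob q {(a, y0, y1). y0 \<and> y1} - PY0 q * PY1 q"
    using assms unfolding corr_def by auto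
  then show ?thesis
    unfolding prob_both_eq_pmf THR_eq_pmf PY0_eq_pmf by (simp add: algebra_simps)
qed

lemma corr_ge_iff_THR_le:
  assumes "0 < PY0 q" "PY0 q < 1" "0 < PY1 q" "PY1 q < 1"
  shows "rt \<le> corr q \<longleftrightarrow> THR q \<le> PY0 q * (1 - PY1 q) - rt * sd_prod (PY0 q) (PY1 q)"
  using sd_prod_pos[OF assms] unfolding THR_eq_corr[OF assms] by simp

lemma THR_le_THR_U:
  assumes "0 < PY0 q" "PY0 q < 1" "0 < PY1 q" "PY1 q < 1" and "rt \<le> corr q"
  shows "THR q \<le> THR_U (PY0 q) (PY1 q) rt"
  using assms(5) THR_frechet_bounds[of q]
  unfolding THR_U_eq_clamp[OF assms(1-4)] corr_ge_iff_THR_le[OF assms(1-4)] by simp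

lemma indep_law_exists:
  fixes p m0 m1 t :: real
  assumes "0 \<le> p" "p \<le> 1" "0 \<le> t" "m0 - m1 \<le> t" "t \<le> m0" "t \<le> 1 - m1"
  shows "\<exists>Q. treatment_indep Q \<and> PrA Q True = p \<and> PY0 Q = m0 \<and> PY1 Q = m1 \<and> THR Q = t"
proof -
  define f :: "bool \<times> bool \<times> bool \<Rightarrow> real" where
    "f = (\<lambda>(a, y0, y1). (if a then p else 1 - p) *
       (if y0 then if y1 then m0 - t else t else if y1 then m1 - m0 + t else 1 - m1 - t))"
  have f_nonneg: "0 \<le> f z" for z
    using assms unfolding f_def by (auto split: prod.splits)
  have "sum f UNIV = 1"
    unfolding f_def UNIV_bool3 by (simp add: algebra_simps)
  then have "pmf (embed_pmf f) = f"
    using f_nonneg pmf_embed_pmf[of f] by (auto simp: nn_integral_count_space_finite)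
  then obtain Q where pmf_Q: "pmf Q = f"
    by blast
  have PrA_Q: "PrA Q a = (if a then p else 1 - p)" for a
    unfolding PrA_eq_pmf pmf_Q f_def by (simp add: algebra_simps)
  have "treatment_indep Q"
    unfolding treatment_indep_def PrA_Q unfolding pmf_Q f_def by (simp add: algebra_simps)
  moreover have "PY0 Q = m0" "PY1 Q = m1" "THR Q = t"
    unfolding PY0_eq_pmf PY1_eq_pmf THR_eq_pmf pmf_Q f_def by (simp_all add: algebra_simps)
  ultimately show ?thesis
    using PrA_Q[of True] by auto
qed

lemma THR_U_attained:
  assumes "0 < PY0 q" "PY0 q < 1" "0 < PY1 q" "PY1 q < 1" and "rt \<le> corr q"
    and "0 \<le> p" "p \<le> 1"
  shows "\<exists>Q. treatment_indep Q \<and> PrA Q True = p \<and> PY0 Q = PY0 q \<and> PY1 Q = PY1 q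
    \<and> rt \<le> corr Q \<and> THR Q = THR_U (PY0 q) (PY1 q) rt"
proof -
  let ?m0 = "PY0 q" and ?m1 = "PY1 q"
  let ?s = "sd_prod ?m0 ?m1" and ?t = "THR_U ?m0 ?m1 rt"
  have "THR q \<le> ?m0 * (1 - ?m1) - rt * ?s"
    using assms(5) unfolding corr_ge_iff_THR_le[OF assms(1-4)] .
  then have t_eq: "?t = min (min ?m0 (1 - ?m1)) (?m0 * (1 - ?m1) - rt * ?s)"
    using THR_U_eq_min[OF assms(1-4)] THR_frechet_bounds(1)[of q] by simp
  have "0 \<le> ?t" "?m0 - ?m1 \<le> ?t"
    using THR_le_THR_U[OF assms(1-5)] THR_frechet_bounds(1,2)[of q] by linarith+
  moreover have "?t \<le> ?m0" "?t \<le> 1 - ?m1"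
    using THR_U_le_frechet[OF assms(1-4)] by simp_all
  ultimately obtain Q where Q: "treatment_indep Q" "PrA Q True = p" "PY0 Q = ?m0" "PY1 Q = ?m1"
      "THR Q = ?t"
    using indep_law_exists[OF assms(6,7)] by blast
  have "THR Q \<le> ?m0 * (1 - ?m1) - rt * ?s"
    using Q(5) t_eq by simp
  then have "rt \<le> corr Q"
    using corr_ge_iff_THR_le[of Q] Q(3,4) assms(1-4) by simp
  then show ?thesis
    using Q by blast
qed

lemma assumption1_D:
  assumes "assumption1 eps K" "0 \<le> eps"
  shows "treatment_indep (K x)" "PrA (K x) a \<noteq> 0"
proof -
  have "eps < PrA (K x) True" "PrA (K x) True < 1 - eps"
    using assms(1) unfolding assumption1_iff by auto
  then show "PrA (K x) a \<noteq> 0"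
    using assms(2) by (cases a) (simp_all add: PrA_False)
  show "treatment_indep (K x)"
    using assms(1) unfolding assumption1_iff by blast
qed

lemma compatible_THR_le:
  assumes "0 \<le> eps" "compatible eps rt K K'" "\<forall>a. 0 < mu (K x) a \<and> mu (K x) a < 1"
  shows "THR (K' x) \<le> THR_U (mu (K x) False) (mu (K x) True) (rt x)"
proof -
  have "obs (K' x) = obs (K x)" "assumption1 eps K'" "rt x \<le> corr (K' x)"
    using assms(2) unfolding compatible_def by blast+
  then have mu: "mu (K x) a = (if a then PY1 (K' x) else PY0 (K' x))" for a
    using mu_eq_if_obs_eq mu_eq_PY assumption1_D assms(1) by metis
  have "0 < PY0 (K' x)" "PY0 (K' x) < 1" "0 < PY1 (K' x)" "PY1 (K' x) < 1"
    using assms(3) unfolding mu by (metis (full_types))+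
  then show ?thesis
    using THR_le_THR_U \<open>rt x \<le> corr (K' x)\<close> unfolding mu by simp
qed

lemma compatible_fun_upd:
  assumes "compatible eps rt K K'" "treatment_indep Q" "obs Q = obs (K x)" "rt x \<le> corr Q"
  shows "compatible eps rt K (K'(x := Q))"
proof -
  have "obs Q = obs (K' x)"
    using assms(1,3) unfolding compatible_def by simp
  then have "PrA Q True = PrA (K' x) True"
    by (simp add: PrA_obs)
  then show ?thesis
    using assms unfolding compatible_def assumption1_iff by auto
qed

lemma compatible_THR_U_attained:
  assumes "0 \<le> eps" "assumption1 eps K" "\<forall>y. rt y \<le> corr (K y)"
    and "\<forall>a. 0 < mu (K x) a \<and> mu (K x) a < 1"
  shows "\<exists>K'. compatible eps rt K K' \<and> THR (K' x) = THR_U (mu (K x) False) (mu (K x) True) (rt x)"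
proof -
  let ?q = "K x"
  have indep: "treatment_indep ?q"
    using assumption1_D(1)[OF assms(2,1)] .
  have mu: "mu ?q a = (if a then PY1 ?q else PY0 ?q)" for a
    using mu_eq_PY[OF indep assumption1_D(2)[OF assms(2,1)]] .
  have "0 < PY0 ?q" "PY0 ?q < 1" "0 < PY1 ?q" "PY1 ?q < 1"
    using assms(4) unfolding mu by (metis (full_types))+
  moreover have "0 \<le> PrA ?q True" "PrA ?q True \<le> 1"
    unfolding PrA_def by simp_all
  ultimately obtain Q where Q: "treatment_indep Q" "PrA Q True = PrA ?q True" "PY0 Q = PY0 ?q"
      "PY1 Q = PY1 ?q" "rt x \<le> corr Q" "THR Q = THR_U (mu ?q False) (mu ?q True) (rt x)"
    using THR_U_attained[of ?q "rt x"] assms(3) unfolding mu by auto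
  have "obs Q = obs ?q"
    using obs_eq_if_indep[OF Q(1) indep Q(2-4)] .
  moreover have "compatible eps rt K K"
    using assms(2,3) unfolding compatible_def by simp
  ultimately have "compatible eps rt K (K(x := Q))"
    using compatible_fun_upd[of eps rt K K Q x] Q(1,5) by blast
  then show ?thesis
    using Q(6) by (intro exI[of _ "K(x := Q)"]) simp
qed

theorem proposition1:
  fixes K :: "'x \<Rightarrow> law" and eps :: real and rt :: "'x \<Rightarrow> real"
  assumes "0 < eps" and "eps < 1/2"
    and "assumption1 eps K"
    and "\<forall>x a. 0 < mu (K x) a \<and> mu (K x) a < 1"
    and "\<forall>x. rt x \<le> corr (K x)"
  shows "\<forall>x.
     (\<forall>K'. compatible eps rt K K' \<longrightarrow>
             THR (K' x) \<le> THR_U (mu (K x) False) (mu (K x) True) (rt x))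
   \<and> (\<exists>K'. compatible eps rt K K' \<and>
             THR (K' x) = THR_U (mu (K x) False) (mu (K x) True) (rt x))
   \<and> THR_U (mu (K x) False) (mu (K x) True) (rt x) \<le> min (mu (K x) False) (1 - mu (K x) True)"
proof (intro allI conjI impI)
  fix x
  have eps: "0 \<le> eps"
    using assms(1) by simp
  have mu: "\<forall>a. 0 < mu (K x) a \<and> mu (K x) a < 1"
    using assms(4) by blast
  show "THR (K' x) \<le> THR_U (mu (K x) False) (mu (K x) True) (rt x)"
    if "compatible eps rt K K'" for K'
    using compatible_THR_le[OF eps that mu] .
  show "\<exists>K'. compatible eps rt K K' \<and> THR (K' x) = THR_U (mu (K x) False) (mu (K x) True) (rt x)"
    using compatible_THR_U_attained[OF eps assms(3,5) mu] .
  show "THR_U (mu (K x) False) (mu (K x) True) (rt x) \<le> min (mu (K x) False) (1 - mu (K x) True)"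
    using THR_U_le_frechet mu by blast
qed

end
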